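(* Let $\mathcal{L}$ be an ordered field with a convex valuation with value group $\Gamma$, and let $A\in {\operatorname{\mathsf{TPD}}}_n(\mathbb{S}_{\max}^{\vee})$. Then, there exists a $n\times n$ symmetric positive definite matrix ${\bf A}$ over $\mathcal{L}$ such that $\mathrm{sv}({\bf A})= A$.
   Context: $\Gamma$ is a divisible totally ordered abelian group and $\mathbb{S}_{\max}=\mathbb{S}_{\max}(\Gamma)$ the symmetrized tropical semiring, with zero $\mathbf{0}$, unit $\mathbf{1}$, minus $\ominus$; $\mathbb{S}_{\max}^\vee$ is the set of signed elements. $A\in{\operatorname{\mathsf{TPD}}}_n(\mathbb{S}_{\max}^\vee)$ means $A=(a_{ij})$ symmetric with signed entries, $\mathbf{0}<a_{ii}$ and $a_{ij}^2<a_{ii}a_{jj}$ for $i\ne j$ (where $a<b$ iff $b\ominus a$ is positive). For an ordered field $\mathcal{L}$ with a convex (surjective, non-Archimedean) valuation $\mathrm v:\mathcal{L}\to\Gamma\cup\{\bot\}$, the signed valuation is $\mathrm{sv}(b)=\mathrm{sgn}(b)\odot\mathrm v(b)$, where $\mathrm{sgn}(b)$ is $\mathbf{1}$, $\ominus\mathbf{1}$ or $\mathbf{0}$ according as $b>0$, $b<0$, $b=0$; it is applied entrywise. *)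

theory Defs
  imports Main
begin

definition divisible_group :: "('g::linordered_ab_group_add) itself \<Rightarrow> bool" where
  "divisible_group _ \<longleftrightarrow> (\<forall>(x::'g) (n::nat). n > 0 \<longrightarrow> (\<exists>y::'g. (\<Sum>i<n. y) = x))"

text \<open>Elements: zero, positive gamma, negative (ominus gamma), balanced (gamma degree).\<close>
datatype 'g smax = SZero | SPos 'g | SNeg 'g | SBal 'g

fun smodulus :: "'g smax \<Rightarrow> 'g" where
  "smodulus (SPos g) = g" | "smodulus (SNeg g) = g" | "smodulus (SBal g) = g"
| "smodulus SZero = undefined"

fun ssign :: "'g smax \<Rightarrow> int" where
  "ssign SZero = 0" | "ssign (SPos g) = 1" | "ssign (SNeg g) = -1" | "ssign (SBal g) = 0"

definition smk :: "int \<Rightarrow> 'g \<Rightarrow> 'g smax" where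
  "smk s g = (if s = 1 then SPos g else if s = -1 then SNeg g else SBal g)"

definition splus :: "('g::linorder) smax \<Rightarrow> 'g smax \<Rightarrow> 'g smax" (infixl "\<oplus>\<^sub>S" 65) where
  "splus a b = (if a = SZero then b else if b = SZero then a
     else if smodulus b < smodulus a then a
     else if smodulus a < smodulus b then b
     else if a = b then a else SBal (smodulus a))"

definition stimes :: "('g::ab_semigroup_add) smax \<Rightarrow> 'g smax \<Rightarrow> 'g smax" (infixl "\<odot>\<^sub>S" 70) where
  "stimes a b = (if a = SZero \<or> b = SZero then SZero
     else (if ssign a = 0 \<or> ssign b = 0 then SBal (smodulus a + smodulus b)
           else smk (ssign a * ssign b) (smodulus a + smodulus b)))"

fun sminus :: "'g smax \<Rightarrow> 'g smax" where
  "sminus SZero = SZero" | "sminus (SPos g) = SNeg g" | "sminus (SNeg g) = SPos g"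
| "sminus (SBal g) = SBal g"

definition sunit :: "('g::zero) smax" where "sunit = SPos 0"

definition spositive :: "'g smax \<Rightarrow> bool" where
  "spositive a \<longleftrightarrow> (\<exists>g. a = SPos g)"

definition ssigned :: "'g smax \<Rightarrow> bool" where
  "ssigned a \<longleftrightarrow> a = SZero \<or> (\<exists>g. a = SPos g) \<or> (\<exists>g. a = SNeg g)"

definition sless :: "('g::linorder) smax \<Rightarrow> 'g smax \<Rightarrow> bool" where
  "sless a b \<longleftrightarrow> spositive (b \<oplus>\<^sub>S sminus a)"

definition TPD :: "('n::finite \<Rightarrow> 'n \<Rightarrow> ('g::linordered_ab_group_add) smax) \<Rightarrow> bool" where
  "TPD A \<longleftrightarrow> (\<forall>i j. A i j = A j i) \<and> (\<forall>i j. ssigned (A i j))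
     \<and> (\<forall>i. sless SZero (A i i))
     \<and> (\<forall>i j. i \<noteq> j \<longrightarrow> sless (A i j \<odot>\<^sub>S A i j) (A i i \<odot>\<^sub>S A j j))"

text \<open>v : L -> Gamma \<union> {bot}, with None playing the role of bot.\<close>
definition convex_valuation :: "(('a::linordered_field) \<Rightarrow> ('g::linordered_ab_group_add) option) \<Rightarrow> bool" where
  "convex_valuation v \<longleftrightarrow>
     (\<forall>x. v x = None \<longleftrightarrow> x = 0)
   \<and> (\<forall>x y. x \<noteq> 0 \<longrightarrow> y \<noteq> 0 \<longrightarrow> v (x * y) = Some (the (v x) + the (v y)))
   \<and> (\<forall>x y. x \<noteq> 0 \<longrightarrow> y \<noteq> 0 \<longrightarrow> x + y \<noteq> 0 \<longrightarrow> the (v (x + y)) \<le> max (the (v x)) (the (v y)))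
   \<and> (\<forall>g. \<exists>x. v x = Some g)
   \<and> (\<forall>x y. 0 < x \<longrightarrow> x \<le> y \<longrightarrow> the (v x) \<le> the (v y))"

definition sval :: "(('a::linordered_field) \<Rightarrow> 'g option) \<Rightarrow> 'a \<Rightarrow> 'g smax" where
  "sval v b = (if b > 0 then SPos (the (v b)) else if b < 0 then SNeg (the (v b)) else SZero)"

definition sym_pos_def :: "('n::finite \<Rightarrow> 'n \<Rightarrow> 'a::linordered_field) \<Rightarrow> bool" where
  "sym_pos_def B \<longleftrightarrow> (\<forall>i j. B i j = B j i)
     \<and> (\<forall>x::'n \<Rightarrow> 'a. x \<noteq> (\<lambda>_. 0) \<longrightarrow> (\<Sum>i\<in>UNIV. \<Sum>j\<in>UNIV. x i * B i j * x j) > 0)"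

end

theory Submission
  imports Defs
begin

text \<open>Lift each signed entry of A to a field element with that signed valuation; the lifted
  matrix B is symmetric with positive diagonal. For i \<noteq> j tropical positive definiteness says
  v(b_ij^2) < v(b_ii b_jj), and a convex valuation is non-Archimedean, so b_ij^2 is smaller
  than b_ii b_jj by any natural factor, in particular by (2n)^2. A symmetric matrix with positive
  diagonal and off-diagonal entries that small is positive definite: the cross terms of its
  quadratic form take away at most half of the diagonal part.\<close>

lemma neg_cross_term_le:
  fixes p q c u w :: "'a::linordered_field"
  assumes "p > 0" "q > 0" "c\<^sup>2 \<le> p * q"
  shows "- (c * u * w) \<le> (p * u\<^sup>2 + q * w\<^sup>2) / 2"
proof -
  have "0 \<le> (p*u + c*w)\<^sup>2 + (p*q - c\<^sup>2) * w\<^sup>2"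
    using assms by simp
  also have "\<dots> = p * (p * u\<^sup>2 + q * w\<^sup>2 + 2 * (c * u * w))"
    by (simp add: algebra_simps power2_eq_square)
  finally have "0 \<le> p * u\<^sup>2 + q * w\<^sup>2 + 2 * (c * u * w)"
    using assms(1) by (simp add: zero_le_mult_iff)
  then show ?thesis by (simp add: field_simps)
qed

lemma sum_diagonal_minus_mean:
  fixes f :: "'n::finite \<Rightarrow> 'a::linordered_field"
  shows "(\<Sum>i\<in>UNIV. \<Sum>j\<in>UNIV.
      (if i = j then f i else 0) - (f i + f j) / (4 * of_nat (card (UNIV :: 'n set))))
    = (\<Sum>i\<in>UNIV. f i) / 2"
proof -
  define N :: 'a where "N = of_nat (card (UNIV :: 'n set))"
  have "N > 0" unfolding N_def by (simp add: finite_UNIV_card_ge_0)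
  have "(\<Sum>i\<in>UNIV. \<Sum>j\<in>UNIV. (if i = j then f i else 0) - (f i + f j) / (4 * N))
      = (\<Sum>i\<in>UNIV. f i) - (\<Sum>i\<in>UNIV. \<Sum>j\<in>UNIV. f i + f j) / (4 * N)"
    by (simp add: sum_subtractf sum_divide_distrib)
  also have "(\<Sum>i\<in>UNIV. \<Sum>j\<in>UNIV. f i + f j) = 2 * N * (\<Sum>i\<in>UNIV. f i)"
    by (simp add: sum.distrib sum_distrib_left sum_distrib_right N_def algebra_simps)
  finally show ?thesis
    using \<open>N > 0\<close> unfolding N_def[symmetric] by (simp add: field_simps)
qed

lemma sym_pos_def_if_off_diagonal_small:
  fixes B :: "'n::finite \<Rightarrow> 'n \<Rightarrow> 'a::linordered_field"
  assumes sym: "\<And>i j. B i j = B j i"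
    and diag: "\<And>i. B i i > 0"
    and off_diag: "\<And>i j. i \<noteq> j \<Longrightarrow>
      (2 * of_nat (card (UNIV :: 'n set)))\<^sup>2 * (B i j)\<^sup>2 \<le> B i i * B j j"
  shows "sym_pos_def B"
  unfolding sym_pos_def_def
proof (intro conjI allI impI)
  fix x :: "'n \<Rightarrow> 'a"
  assume "x \<noteq> (\<lambda>_. 0)"
  then obtain k where "x k \<noteq> 0" by auto
  define N :: 'a where "N = of_nat (card (UNIV :: 'n set))"
  have "N > 0" unfolding N_def by (simp add: finite_UNIV_card_ge_0)
  define f where "f i = B i i * (x i)\<^sup>2" for i
  have f_nonneg: "f i \<ge> 0" for i
    unfolding f_def using diag[of i] by simp
  have "f k > 0"
    unfolding f_def using diag[of k] \<open>x k \<noteq> 0\<close> by simp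
  then have "(\<Sum>i\<in>UNIV. f i) > 0"
    using f_nonneg by (intro sum_pos2[of UNIV k]) auto
  have term_bound: "x i * B i j * x j \<ge> (if i = j then f i else 0) - (f i + f j) / (4 * N)" for i j
  proof (cases "i = j")
    case True
    then show ?thesis
      using f_nonneg[of i] \<open>N > 0\<close> unfolding f_def by (simp add: power2_eq_square algebra_simps)
  next
    case False
    have "(B i j)\<^sup>2 \<le> (B i i / (2 * N)) * (B j j / (2 * N))"
      using off_diag[OF False] \<open>N > 0\<close> unfolding N_def[symmetric]
      by (simp add: field_simps power2_eq_square)
    from neg_cross_term_le[OF _ _ this, of "x i" "x j"]
    have "- (B i j * x i * x j) \<le> (B i i / (2 * N) * (x i)\<^sup>2 + B j j / (2 * N) * (x j)\<^sup>2) / 2"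
      using diag \<open>N > 0\<close> by simp
    also have "\<dots> = (f i + f j) / (4 * N)"
      unfolding f_def using \<open>N > 0\<close> by (simp add: field_simps)
    finally show ?thesis
      using False by (simp add: algebra_simps)
  qed
  have "(\<Sum>i\<in>UNIV. f i) / 2
      = (\<Sum>i\<in>UNIV. \<Sum>j\<in>UNIV. (if i = j then f i else 0) - (f i + f j) / (4 * N))"
    unfolding N_def by (rule sum_diagonal_minus_mean[symmetric])
  also have "\<dots> \<le> (\<Sum>i\<in>UNIV. \<Sum>j\<in>UNIV. x i * B i j * x j)"
    by (intro sum_mono term_bound)
  finally show "(\<Sum>i\<in>UNIV. \<Sum>j\<in>UNIV. x i * B i j * x j) > 0"
    using \<open>(\<Sum>i\<in>UNIV. f i) > 0\<close> by simp
qed (rule sym)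

lemma convex_valuation_mult:
  assumes "convex_valuation v" "x \<noteq> 0" "y \<noteq> 0"
  shows "the (v (x * y)) = the (v x) + the (v y)"
  using assms unfolding convex_valuation_def by simp

lemma convex_valuation_add_le:
  assumes "convex_valuation v" "x \<noteq> 0" "y \<noteq> 0" "x + y \<noteq> 0"
  shows "the (v (x + y)) \<le> max (the (v x)) (the (v y))"
  using assms unfolding convex_valuation_def by simp

lemma convex_valuation_mono:
  assumes "convex_valuation v" "0 < x" "x \<le> y"
  shows "the (v x) \<le> the (v y)"
  using assms unfolding convex_valuation_def by simp

lemma convex_valuation_one:
  assumes "convex_valuation (v :: 'a::linordered_field \<Rightarrow> 'g::linordered_ab_group_add option)"
  shows "the (v 1) = 0"
  using convex_valuation_mult[OF assms, of 1 1] by simp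

lemma convex_valuation_minus_one:
  assumes "convex_valuation (v :: 'a::linordered_field \<Rightarrow> 'g::linordered_ab_group_add option)"
  shows "the (v (- 1)) = 0"
  using convex_valuation_mult[OF assms, of "- 1" "- 1"] convex_valuation_one[OF assms] by simp

lemma convex_valuation_minus:
  assumes "convex_valuation v" "x \<noteq> 0"
  shows "v (- x) = v x"
proof -
  have "v ((- 1) * x) = Some (the (v (- 1)) + the (v x))"
    using assms unfolding convex_valuation_def by (metis zero_neq_neg_one)
  moreover have "v x = Some (the (v x))"
    using assms unfolding convex_valuation_def by (cases "v x") auto
  ultimately show ?thesis
    using convex_valuation_minus_one[OF assms(1)] by simp
qed

lemma convex_valuation_of_nat_le:
  assumes "convex_valuation (v :: 'a::linordered_field \<Rightarrow> 'g::linordered_ab_group_add option)"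
    and "n \<ge> 1"
  shows "the (v (of_nat n)) \<le> 0"
  using assms(2)
proof (induction n rule: dec_induct)
  case base
  then show ?case using convex_valuation_one[OF assms(1)] by simp
next
  case (step n)
  have "(of_nat n :: 'a) > 0" "(of_nat n :: 'a) + 1 > 0"
    using step(1) by (simp_all add: add_pos_pos)
  then have "the (v (of_nat n + 1 :: 'a)) \<le> max (the (v (of_nat n :: 'a))) (the (v 1))"
    using convex_valuation_add_le[OF assms(1), of "of_nat n" 1] by simp
  then show ?case
    using step(3) convex_valuation_one[OF assms(1)] by (simp add: add.commute)
qed

lemma convex_valuation_of_nat_mult_less:
  assumes "convex_valuation v" "y > 0" "z > 0"
    and "the (v y) < (the (v z) :: 'g::linordered_ab_group_add)"
  shows "of_nat n * y < (z :: 'a::linordered_field)"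
proof (cases "n = 0")
  case False
  show ?thesis
  proof (rule ccontr)
    assume "\<not> of_nat n * y < z"
    then have "the (v z) \<le> the (v (of_nat n * y))"
      using convex_valuation_mono[OF assms(1,3)] by simp
    also have "\<dots> = the (v (of_nat n :: 'a)) + the (v y)"
      using convex_valuation_mult[OF assms(1)] assms(2) False by simp
    also have "\<dots> \<le> the (v y)"
      using convex_valuation_of_nat_le[OF assms(1), of n] False by simp
    finally show False using assms(4) by simp
  qed
qed (use assms(3) in simp)

lemma convex_valuation_ex_pos:
  assumes "convex_valuation v"
  shows "\<exists>x > 0. v x = Some g"
proof -
  obtain x where x: "v x = Some g"
    using assms unfolding convex_valuation_def by blast
  then have "x \<noteq> 0"
    using assms unfolding convex_valuation_def by (metis option.distinct(1))
  then consider "x > 0" | "- x > 0" by fastforce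
  then show ?thesis
  proof cases
    case 2
    then show ?thesis
      using x convex_valuation_minus[OF assms \<open>x \<noteq> 0\<close>] by (intro exI[of _ "- x"]) simp
  qed (use x in auto)
qed

lemma sless_SZero_iff: "sless SZero a \<longleftrightarrow> spositive a"
  unfolding sless_def splus_def by simp

lemma sless_SPos_SPos_iff: "sless (SPos a) (SPos b) \<longleftrightarrow> a < b"
  unfolding sless_def splus_def spositive_def by auto

lemma stimes_self_signed:
  assumes "ssigned a" "a \<noteq> SZero"
  shows "a \<odot>\<^sub>S a = SPos (smodulus a + smodulus a)"
  using assms unfolding ssigned_def stimes_def smk_def by auto

lemma stimes_SPos_SPos: "SPos a \<odot>\<^sub>S SPos b = SPos (a + b)"
  unfolding stimes_def smk_def by simp

lemma TPD_diagonal: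
  assumes "TPD A"
  shows "A i i = SPos (smodulus (A i i))"
proof -
  have "spositive (A i i)"
    using assms unfolding TPD_def sless_SZero_iff by blast
  then show ?thesis
    unfolding spositive_def by auto
qed

lemma TPD_off_diagonal:
  assumes "TPD A" "i \<noteq> j" "A i j \<noteq> SZero"
  shows "smodulus (A i j) + smodulus (A i j) < smodulus (A i i) + smodulus (A j j)"
proof -
  have "sless (A i j \<odot>\<^sub>S A i j) (A i i \<odot>\<^sub>S A j j)" "ssigned (A i j)"
    using assms(1,2) unfolding TPD_def by auto
  then show ?thesis
    using TPD_diagonal[OF assms(1), of i] TPD_diagonal[OF assms(1), of j]
    by (metis stimes_self_signed[OF _ assms(3)] stimes_SPos_SPos sless_SPos_SPos_iff)
qed

definition positive_lift :: "('a::linordered_field \<Rightarrow> 'g option) \<Rightarrow> 'g \<Rightarrow> 'a" where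
  "positive_lift v g = (SOME x. x > 0 \<and> v x = Some g)"

definition signed_lift :: "('a::linordered_field \<Rightarrow> 'g option) \<Rightarrow> 'g smax \<Rightarrow> 'a" where
  "signed_lift v a =
    (case a of SPos g \<Rightarrow> positive_lift v g | SNeg g \<Rightarrow> - positive_lift v g | _ \<Rightarrow> 0)"

lemma
  assumes "convex_valuation v"
  shows positive_lift_pos: "positive_lift v g > 0"
    and valuation_positive_lift: "v (positive_lift v g) = Some g"
  using someI_ex[OF convex_valuation_ex_pos[OF assms, of g]]
  unfolding positive_lift_def by auto

lemma sval_signed_lift:
  assumes v: "convex_valuation v" and "ssigned a"
  shows "sval v (signed_lift v a) = a"
proof -
  consider "a = SZero" | g where "a = SPos g" | g where "a = SNeg g"
    using \<open>ssigned a\<close> unfolding ssigned_def by blast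
  then show ?thesis
  proof cases
    case (3 g)
    have "v (- positive_lift v g) = Some g"
      using convex_valuation_minus[OF v] positive_lift_pos[OF v, of g] valuation_positive_lift[OF v]
      by simp
    then show ?thesis
      using 3 positive_lift_pos[OF v, of g] unfolding signed_lift_def sval_def by simp
  qed (use positive_lift_pos[OF v] valuation_positive_lift[OF v] in
        \<open>auto simp: signed_lift_def sval_def\<close>)
qed

lemma signed_lift_diagonal:
  assumes "TPD A"
  shows "signed_lift v (A i i) = positive_lift v (smodulus (A i i))"
proof -
  obtain g where "A i i = SPos g"
    using TPD_diagonal[OF assms] by blast
  then show ?thesis
    by (simp add: signed_lift_def)
qed

lemma signed_lift_off_diagonal_small:
  assumes v: "convex_valuation v" and "TPD A" "i \<noteq> j"
  shows "of_nat n * (signed_lift v (A i j))\<^sup>2 < signed_lift v (A i i) * signed_lift v (A j j)"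
proof -
  define d where "d k = smodulus (A k k)" for k
  have diag: "signed_lift v (A k k) = positive_lift v (d k)" for k
    using signed_lift_diagonal[OF \<open>TPD A\<close>] unfolding d_def .
  have "signed_lift v (A i i) * signed_lift v (A j j) > 0"
    unfolding diag using positive_lift_pos[OF v] by simp
  moreover have "of_nat n * (signed_lift v (A i j))\<^sup>2 < signed_lift v (A i i) * signed_lift v (A j j)"
    if "A i j \<noteq> SZero"
  proof -
    define g where "g = smodulus (A i j)"
    have "ssigned (A i j)"
      using \<open>TPD A\<close> unfolding TPD_def by auto
    then have "(signed_lift v (A i j))\<^sup>2 = positive_lift v g * positive_lift v g"
      using that unfolding ssigned_def signed_lift_def g_def by (auto simp: power2_eq_square)
    moreover have "the (v (positive_lift v g * positive_lift v g)) = g + g"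
      using convex_valuation_mult[OF v] positive_lift_pos[OF v] valuation_positive_lift[OF v]
      by (simp add: less_imp_neq[symmetric])
    moreover have "the (v (positive_lift v (d i) * positive_lift v (d j))) = d i + d j"
      using convex_valuation_mult[OF v] positive_lift_pos[OF v] valuation_positive_lift[OF v]
      by (simp add: less_imp_neq[symmetric])
    moreover have "g + g < d i + d j"
      using TPD_off_diagonal[OF \<open>TPD A\<close> \<open>i \<noteq> j\<close> that] unfolding g_def d_def .
    ultimately show ?thesis
      unfolding diag using convex_valuation_of_nat_mult_less[OF v] positive_lift_pos[OF v]
      by simp
  qed
  ultimately show ?thesis
    by (cases "A i j = SZero") (auto simp: signed_lift_def)
qed

theorem proposition6p2:
  fixes v :: "'a::linordered_field \<Rightarrow> 'g::linordered_ab_group_add option"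
    and A :: "'n::finite \<Rightarrow> 'n \<Rightarrow> 'g smax"
  assumes "divisible_group TYPE('g)"
    and "convex_valuation v"
    and "TPD A"
  shows "\<exists>B :: 'n \<Rightarrow> 'n \<Rightarrow> 'a. sym_pos_def B \<and> (\<forall>i j. sval v (B i j) = A i j)"
proof (intro exI conjI allI)
  define B where "B i j = signed_lift v (A i j)" for i j
  show "sym_pos_def B"
  proof (rule sym_pos_def_if_off_diagonal_small)
    show "B i j = B j i" for i j
      using \<open>TPD A\<close> unfolding TPD_def B_def by simp
    show "B i i > 0" for i
      unfolding B_def signed_lift_diagonal[OF \<open>TPD A\<close>]
      using positive_lift_pos[OF \<open>convex_valuation v\<close>] .
    show "(2 * of_nat (card (UNIV :: 'n set)))\<^sup>2 * (B i j)\<^sup>2 \<le> B i i * B j j" if "i \<noteq> j" for i j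
      using signed_lift_off_diagonal_small[OF \<open>convex_valuation v\<close> \<open>TPD A\<close> that,
          of "(2 * card (UNIV :: 'n set))\<^sup>2"]
      unfolding B_def by simp
  qed
  show "sval v (B i j) = A i j" for i j
    using sval_signed_lift[OF \<open>convex_valuation v\<close>] \<open>TPD A\<close> unfolding TPD_def B_def by simp
qed

end
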